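(* Let $G$ be a finite graph and $K$ a maximal clique of $G$. Then $\log_2(\mathsf{dn}(K)+2)\le|\widetilde{K}|\le 2^{\mathsf{dn}(K)}$.
   Context: Two vertices are equivalent if they lie in exactly the same maximal cliques of $G$; $\widetilde{K}$ is the set of equivalence classes intersecting $K$. For $X\subseteq V(G)$, with $N(X)$ the set of vertices outside $X$ having a neighbour in $X$, a set $Y\subseteq N(X)$ is $X$-diverse if $N(y_1)\cap X\neq N(y_2)\cap X$ for all distinct $y_1,y_2\in Y$; the diversity number $\mathsf{dn}(X)$ is the maximum size of an $X$-diverse subset of $N(X)$. *)

theory Defs
  imports Complex_Main
begin

definition graph :: "'a set \<Rightarrow> ('a \<Rightarrow> 'a \<Rightarrow> bool) \<Rightarrow> bool" where
  "graph V E \<longleftrightarrow> finite V \<and> (\<forall>u v. E u v \<longrightarrow> u \<in> V \<and> v \<in> V)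
     \<and> (\<forall>u v. E u v \<longrightarrow> E v u) \<and> (\<forall>v. \<not> E v v)"

definition clique :: "'a set \<Rightarrow> ('a \<Rightarrow> 'a \<Rightarrow> bool) \<Rightarrow> 'a set \<Rightarrow> bool" where
  "clique V E C \<longleftrightarrow> C \<subseteq> V \<and> (\<forall>x\<in>C. \<forall>y\<in>C. x \<noteq> y \<longrightarrow> E x y)"

definition maximal_clique :: "'a set \<Rightarrow> ('a \<Rightarrow> 'a \<Rightarrow> bool) \<Rightarrow> 'a set \<Rightarrow> bool" where
  "maximal_clique V E C \<longleftrightarrow> clique V E C \<and> (\<forall>C'. clique V E C' \<and> C \<subseteq> C' \<longrightarrow> C' = C)"

definition clique_equiv :: "'a set \<Rightarrow> ('a \<Rightarrow> 'a \<Rightarrow> bool) \<Rightarrow> 'a rel" where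
  "clique_equiv V E = {(u, v). u \<in> V \<and> v \<in> V \<and>
      (\<forall>C. maximal_clique V E C \<longrightarrow> (u \<in> C \<longleftrightarrow> v \<in> C))}"

text \<open>\<open>K~\<close>: the set of equivalence classes intersecting K.\<close>
definition classes_meeting :: "'a set \<Rightarrow> ('a \<Rightarrow> 'a \<Rightarrow> bool) \<Rightarrow> 'a set \<Rightarrow> 'a set set" where
  "classes_meeting V E K = {Q \<in> V // clique_equiv V E. Q \<inter> K \<noteq> {}}"

definition nbhd :: "'a set \<Rightarrow> ('a \<Rightarrow> 'a \<Rightarrow> bool) \<Rightarrow> 'a \<Rightarrow> 'a set" where
  "nbhd V E y = {u \<in> V. E y u}"

definition set_nbhd :: "'a set \<Rightarrow> ('a \<Rightarrow> 'a \<Rightarrow> bool) \<Rightarrow> 'a set \<Rightarrow> 'a set" where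
  "set_nbhd V E X = {v \<in> V - X. \<exists>x\<in>X. E v x}"

definition diverse :: "'a set \<Rightarrow> ('a \<Rightarrow> 'a \<Rightarrow> bool) \<Rightarrow> 'a set \<Rightarrow> 'a set \<Rightarrow> bool" where
  "diverse V E X Y \<longleftrightarrow> Y \<subseteq> set_nbhd V E X \<and>
     (\<forall>y1\<in>Y. \<forall>y2\<in>Y. y1 \<noteq> y2 \<longrightarrow> nbhd V E y1 \<inter> X \<noteq> nbhd V E y2 \<inter> X)"

definition dn :: "'a set \<Rightarrow> ('a \<Rightarrow> 'a \<Rightarrow> bool) \<Rightarrow> 'a set \<Rightarrow> nat" where
  "dn V E X = Max {card Y | Y. diverse V E X Y}"

end

theory Submission
  imports Defs
begin

text \<open>Let \<open>T\<close> be the set of traces \<open>N(y) \<inter> K\<close> of the vertices \<open>y \<in> N(K)\<close>. A \<open>K\<close>-diverse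
  set has at most one vertex per trace, and one representative per trace is \<open>K\<close>-diverse, so
  \<open>dn(K) = |T|\<close>. Each trace is closed under the equivalence: if \<open>y\<close> sees \<open>u \<in> K\<close>, a maximal
  clique containing \<open>y\<close> and \<open>N(y) \<inter> K\<close> contains \<open>u\<close>, hence every \<open>v\<close> equivalent to \<open>u\<close>, so \<open>y\<close>
  sees \<open>v\<close>. Conversely, vertices \<open>u, v\<close> of \<open>K\<close> lying in the same traces are equivalent: a
  maximal clique \<open>C\<close> containing \<open>u\<close> but not \<open>v\<close> has a vertex \<open>y\<close> not adjacent to \<open>v\<close>, and the
  trace of \<open>y\<close> contains \<open>u\<close> but not \<open>v\<close>. So the relation "class meets trace" between \<open>K~\<close> and
  \<open>T\<close> determines each class by the traces it meets, giving \<open>|K~| \<le> 2^|T|\<close>, and each trace by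
  the classes it meets, a nonempty set of classes which by maximality of \<open>K\<close> is not all of
  \<open>K~\<close>, giving \<open>|T| + 2 \<le> 2^|K~|\<close>.\<close>

definition traces :: "'a set \<Rightarrow> ('a \<Rightarrow> 'a \<Rightarrow> bool) \<Rightarrow> 'a set \<Rightarrow> 'a set set" where
  "traces V E X = (\<lambda>y. nbhd V E y \<inter> X) ` set_nbhd V E X"

lemma graph_sym: "graph V E \<Longrightarrow> E u v \<Longrightarrow> E v u"
  unfolding graph_def by blast

lemma clique_insert_iff:
  assumes "graph V E"
  shows "clique V E (insert y C) \<longleftrightarrow> clique V E C \<and> y \<in> V \<and> (\<forall>x\<in>C. x \<noteq> y \<longrightarrow> E y x)"
  using graph_sym[OF assms] unfolding clique_def by auto

lemma maximal_clique_eqI: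
  "maximal_clique V E C \<Longrightarrow> clique V E C' \<Longrightarrow> C \<subseteq> C' \<Longrightarrow> C' = C"
  unfolding maximal_clique_def by blast

lemma clique_extends_to_maximal_clique:
  assumes "finite V" and "clique V E S"
  obtains C where "maximal_clique V E C" and "S \<subseteq> C"
proof -
  let ?A = "{C. clique V E C \<and> S \<subseteq> C}"
  have "?A \<subseteq> Pow V"
    unfolding clique_def by blast
  then have "finite ?A"
    using \<open>finite V\<close> by (simp add: finite_subset)
  moreover have "?A \<noteq> {}"
    using assms(2) by blast
  ultimately obtain C where C: "C \<in> ?A" and max: "\<forall>C'\<in>?A. C \<le> C' \<longrightarrow> C = C'"
    by (meson finite_has_maximal)
  have "maximal_clique V E C"
    unfolding maximal_clique_def
  proof (intro conjI allI impI)
    show "clique V E C"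
      using C by simp
    show "C' = C" if "clique V E C' \<and> C \<subseteq> C'" for C'
      using that C max by blast
  qed
  with C show thesis
    using that by blast
qed

lemma equiv_clique_equiv: "equiv V (clique_equiv V E)"
  by (rule equivI) (auto simp: clique_equiv_def refl_on_def sym_def trans_def)

lemma classes_meeting_eq_image:
  assumes "K \<subseteq> V"
  shows "classes_meeting V E K = (\<lambda>u. clique_equiv V E `` {u}) ` K"
proof -
  let ?R = "clique_equiv V E"
  have "Q \<in> (\<lambda>u. ?R `` {u}) ` K" if "Q \<in> V // ?R" and "w \<in> Q \<inter> K" for Q w
  proof -
    from \<open>Q \<in> V // ?R\<close> obtain x where "Q = ?R `` {x}"
      by (rule quotientE)
    with that have "(x, w) \<in> ?R"
      by simp
    with \<open>Q = ?R `` {x}\<close> have "Q = ?R `` {w}"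
      by (simp add: equiv_class_eq[OF equiv_clique_equiv])
    then show ?thesis
      using that by blast
  qed
  moreover have "?R `` {u} \<in> V // ?R" and "u \<in> ?R `` {u}" if "u \<in> K" for u
    using that assms by (auto intro!: quotientI simp del: Image_singleton_iff)
      (auto simp: clique_equiv_def)
  ultimately show ?thesis
    unfolding classes_meeting_def by blast
qed

lemma dn_eq_card_traces:
  assumes "finite V"
  shows "dn V E X = card (traces V E X)"
proof -
  let ?tr = "\<lambda>y. nbhd V E y \<inter> X"
  have fin: "finite (traces V E X)"
    using assms by (simp add: traces_def set_nbhd_def)
  have diverse_iff: "diverse V E X Y \<longleftrightarrow> Y \<subseteq> set_nbhd V E X \<and> inj_on ?tr Y" for Y
    unfolding diverse_def inj_on_def by (auto simp: Int_commute)
  have le: "card Y \<le> card (traces V E X)" if "diverse V E X Y" for Y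
  proof -
    have "card Y = card (?tr ` Y)"
      using that by (simp add: diverse_iff card_image)
    also have "\<dots> \<le> card (traces V E X)"
      using that fin by (intro card_mono) (auto simp: diverse_iff traces_def)
    finally show ?thesis .
  qed
  define Y where "Y = inv_into (set_nbhd V E X) ?tr ` traces V E X"
  have tr_inv: "?tr (inv_into (set_nbhd V E X) ?tr t) = t" if "t \<in> traces V E X" for t
    using that unfolding traces_def by (rule f_inv_into_f)
  have "Y \<subseteq> set_nbhd V E X"
    unfolding Y_def traces_def by (auto intro: inv_into_into)
  moreover have "inj_on ?tr Y"
    unfolding Y_def by (auto simp: inj_on_def tr_inv)
  moreover have "?tr ` Y = traces V E X"
    unfolding Y_def image_image by (simp add: tr_inv cong: image_cong)
  ultimately have "diverse V E X Y" and "card Y = card (traces V E X)"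
    by (auto simp: diverse_iff card_image[symmetric])
  then have "card (traces V E X) \<in> {card Y | Y. diverse V E X Y}"
    by (metis (mono_tags, lifting) mem_Collect_eq)
  moreover have "{card Y | Y. diverse V E X Y} \<subseteq> {..card (traces V E X)}"
    using le by blast
  ultimately show ?thesis
    unfolding dn_def by (intro Max_eqI) (auto intro: finite_subset)
qed

locale graph_maximal_clique =
  fixes V :: "'a set" and E :: "'a \<Rightarrow> 'a \<Rightarrow> bool" and K :: "'a set"
  assumes graph: "graph V E" and maximal: "maximal_clique V E K"
begin

lemma K_clique: "clique V E K"
  using maximal by (simp add: maximal_clique_def)

lemma K_subset_V: "K \<subseteq> V"
  using K_clique unfolding clique_def by blast

lemma finite_V: "finite V"
  using graph unfolding graph_def by blast

lemma finite_traces: "finite (traces V E K)"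
  using finite_V by (simp add: traces_def set_nbhd_def)

lemma K_nonempty:
  assumes "V \<noteq> {}"
  shows "K \<noteq> {}"
proof
  assume "K = {}"
  obtain w where "w \<in> V"
    using assms by blast
  then have "clique V E {w}"
    by (simp add: clique_def)
  with \<open>K = {}\<close> show False
    using maximal_clique_eqI[OF maximal] by blast
qed

lemma trace_subset: "t \<in> traces V E K \<Longrightarrow> t \<subseteq> K"
  unfolding traces_def by blast

lemma trace_nonempty: "t \<in> traces V E K \<Longrightarrow> t \<noteq> {}"
  using K_subset_V unfolding traces_def set_nbhd_def nbhd_def by blast

lemma trace_neq_K: "t \<in> traces V E K \<Longrightarrow> t \<noteq> K"
proof
  assume "t \<in> traces V E K" and "t = K"
  then obtain y where "y \<in> V - K" and "K \<subseteq> nbhd V E y"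
    unfolding traces_def set_nbhd_def by blast
  then have "clique V E (insert y K)"
    using K_clique by (auto simp: clique_insert_iff[OF graph] nbhd_def)
  then show False
    using maximal_clique_eqI[OF maximal] \<open>y \<in> V - K\<close> by blast
qed

lemma trace_closed_clique_equiv:
  assumes "t \<in> traces V E K" and "u \<in> t" and "v \<in> K" and "(u, v) \<in> clique_equiv V E"
  shows "v \<in> t"
proof -
  obtain y where y: "y \<in> V - K" and t: "t = nbhd V E y \<inter> K"
    using assms(1) unfolding traces_def set_nbhd_def by blast
  have "clique V E (insert y t)"
    using K_clique y t graph_sym[OF graph] by (auto simp: clique_insert_iff[OF graph] nbhd_def clique_def)
  then obtain C where C: "maximal_clique V E C" and "insert y t \<subseteq> C"
    by (rule clique_extends_to_maximal_clique[OF finite_V])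
  then have "v \<in> C"
    using assms(2,4) unfolding clique_equiv_def by blast
  moreover have "y \<in> C" and "y \<noteq> v"
    using \<open>insert y t \<subseteq> C\<close> y assms(3) by auto
  ultimately have "E y v"
    using C unfolding maximal_clique_def clique_def by blast
  then show "v \<in> t"
    using t assms(3) K_subset_V unfolding nbhd_def by blast
qed

lemma in_maximal_clique_if_traces_subset:
  assumes "u \<in> K" and "v \<in> K" and traces: "\<forall>t \<in> traces V E K. u \<in> t \<longrightarrow> v \<in> t"
    and C: "maximal_clique V E C" and "u \<in> C"
  shows "v \<in> C"
proof (rule ccontr)
  assume "v \<notin> C"
  have C_clique: "clique V E C"
    using C by (simp add: maximal_clique_def)
  have "\<not> clique V E (insert v C)"
    using maximal_clique_eqI[OF C] \<open>v \<notin> C\<close> by blast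
  then obtain y where y: "y \<in> C" "y \<noteq> v" "\<not> E v y"
    using C_clique K_subset_V \<open>v \<in> K\<close> by (auto simp: clique_insert_iff[OF graph])
  have "y \<notin> K" and "y \<noteq> u"
    using y \<open>u \<in> K\<close> \<open>v \<in> K\<close> \<open>u \<in> C\<close> \<open>v \<notin> C\<close> K_clique
    by (auto simp: clique_def)
  then have "E y u" and "y \<in> V"
    using y(1) \<open>u \<in> C\<close> C_clique by (auto simp: clique_def)
  then have "nbhd V E y \<inter> K \<in> traces V E K"
    using \<open>y \<notin> K\<close> \<open>u \<in> K\<close> unfolding traces_def set_nbhd_def by blast
  moreover have "u \<in> nbhd V E y \<inter> K"
    using \<open>E y u\<close> \<open>u \<in> K\<close> K_subset_V by (simp add: nbhd_def subset_iff)
  ultimately have "v \<in> nbhd V E y \<inter> K"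
    using traces by metis
  then have "E y v"
    by (simp add: nbhd_def)
  then show False
    using y(3) graph_sym[OF graph] by blast
qed

lemma clique_equiv_iff_same_traces:
  assumes "u \<in> K" and "v \<in> K"
  shows "(u, v) \<in> clique_equiv V E \<longleftrightarrow> (\<forall>t \<in> traces V E K. u \<in> t \<longleftrightarrow> v \<in> t)"
proof
  assume uv: "(u, v) \<in> clique_equiv V E"
  then have vu: "(v, u) \<in> clique_equiv V E"
    by (auto simp: clique_equiv_def)
  show "\<forall>t \<in> traces V E K. u \<in> t \<longleftrightarrow> v \<in> t"
  proof (intro ballI iffI)
    fix t assume t: "t \<in> traces V E K"
    show "v \<in> t" if "u \<in> t"
      using t that assms(2) uv by (rule trace_closed_clique_equiv)
    show "u \<in> t" if "v \<in> t"
      using t that assms(1) vu by (rule trace_closed_clique_equiv)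
  qed
next
  assume "\<forall>t \<in> traces V E K. u \<in> t \<longleftrightarrow> v \<in> t"
  then have "\<forall>t \<in> traces V E K. u \<in> t \<longrightarrow> v \<in> t" and "\<forall>t \<in> traces V E K. v \<in> t \<longrightarrow> u \<in> t"
    by simp_all
  then have "u \<in> C \<longleftrightarrow> v \<in> C" if "maximal_clique V E C" for C
    using in_maximal_clique_if_traces_subset[OF assms _ that]
      in_maximal_clique_if_traces_subset[OF assms(2,1) _ that] by blast
  then show "(u, v) \<in> clique_equiv V E"
    using assms K_subset_V by (auto simp: clique_equiv_def)
qed

lemma class_meets_trace_iff:
  assumes "u \<in> K" and "t \<in> traces V E K"
  shows "clique_equiv V E `` {u} \<inter> t \<noteq> {} \<longleftrightarrow> u \<in> t"
proof
  assume "clique_equiv V E `` {u} \<inter> t \<noteq> {}"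
  then obtain w where "w \<in> t" and "(u, w) \<in> clique_equiv V E"
    by blast
  moreover have "w \<in> K"
    using \<open>w \<in> t\<close> trace_subset[OF assms(2)] by blast
  ultimately show "u \<in> t"
    using clique_equiv_iff_same_traces[OF assms(1)] assms(2) by blast
next
  assume "u \<in> t"
  moreover have "u \<in> clique_equiv V E `` {u}"
    using assms(1) K_subset_V by (auto simp: clique_equiv_def)
  ultimately show "clique_equiv V E `` {u} \<inter> t \<noteq> {}"
    by blast
qed

lemma card_classes_meeting_le: "card (classes_meeting V E K) \<le> 2 ^ card (traces V E K)"
proof -
  let ?R = "clique_equiv V E"
  let ?traces_meeting = "\<lambda>Q. {t \<in> traces V E K. Q \<inter> t \<noteq> {}}"
  have "inj_on ?traces_meeting (classes_meeting V E K)"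
  proof (rule inj_onI)
    fix Q Q' assume "Q \<in> classes_meeting V E K" "Q' \<in> classes_meeting V E K"
      and meets: "?traces_meeting Q = ?traces_meeting Q'"
    then obtain u v where u: "u \<in> K" "Q = ?R `` {u}" and v: "v \<in> K" "Q' = ?R `` {v}"
      unfolding classes_meeting_eq_image[OF K_subset_V] by blast
    have "u \<in> t \<longleftrightarrow> v \<in> t" if t: "t \<in> traces V E K" for t
    proof -
      have "u \<in> t \<longleftrightarrow> t \<in> ?traces_meeting Q"
        using class_meets_trace_iff[OF u(1) t] t u(2) by simp
      also have "\<dots> \<longleftrightarrow> t \<in> ?traces_meeting Q'"
        using meets by simp
      also have "\<dots> \<longleftrightarrow> v \<in> t"
        using class_meets_trace_iff[OF v(1) t] t v(2) by simp
      finally show ?thesis .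
    qed
    then have "(u, v) \<in> ?R"
      using clique_equiv_iff_same_traces[OF u(1) v(1)] by blast
    then show "Q = Q'"
      using u(2) v(2) by (simp add: equiv_class_eq[OF equiv_clique_equiv])
  qed
  then have "card (classes_meeting V E K) \<le> card (Pow (traces V E K))"
    by (rule card_inj_on_le) (auto simp: finite_traces)
  then show ?thesis
    using finite_traces by (simp add: card_Pow)
qed

lemma card_traces_add_two_le:
  assumes "V \<noteq> {}"
  shows "card (traces V E K) + 2 \<le> 2 ^ card (classes_meeting V E K)"
proof -
  let ?R = "clique_equiv V E" and ?CM = "classes_meeting V E K"
  let ?classes_meeting_trace = "\<lambda>t. {Q \<in> ?CM. Q \<inter> t \<noteq> {}}"
  have class_in: "?R `` {u} \<in> ?CM" if "u \<in> K" for u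
    using that by (simp add: classes_meeting_eq_image[OF K_subset_V])
  have met_iff: "?R `` {u} \<in> ?classes_meeting_trace t \<longleftrightarrow> u \<in> t" if "u \<in> K" and "t \<in> traces V E K" for u t
    using class_in[OF that(1)] class_meets_trace_iff[OF that] by simp
  have "inj_on ?classes_meeting_trace (traces V E K)"
  proof (rule inj_onI)
    fix t t' assume t: "t \<in> traces V E K" and t': "t' \<in> traces V E K" and "?classes_meeting_trace t = ?classes_meeting_trace t'"
    then have "u \<in> t \<longleftrightarrow> u \<in> t'" if "u \<in> K" for u
      using met_iff[OF that t] met_iff[OF that t'] by simp
    then show "t = t'"
      using trace_subset[OF t] trace_subset[OF t'] by blast
  qed
  moreover have "?classes_meeting_trace t \<in> Pow ?CM - {{}, ?CM}" if t: "t \<in> traces V E K" for t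
  proof -
    obtain u where "u \<in> t"
      using trace_nonempty[OF t] by blast
    then have "?classes_meeting_trace t \<noteq> {}"
      using met_iff[OF _ t] trace_subset[OF t] by blast
    moreover have "?classes_meeting_trace t \<noteq> ?CM"
    proof
      assume all: "?classes_meeting_trace t = ?CM"
      have "u \<in> t" if "u \<in> K" for u
        using met_iff[OF that t] class_in[OF that] all by simp
      then have "K \<subseteq> t"
        by blast
      then show False
        using trace_neq_K[OF t] trace_subset[OF t] by blast
    qed
    ultimately show ?thesis
      by blast
  qed
  moreover have "finite ?CM" and "?CM \<noteq> {}"
    using finite_subset[OF K_subset_V finite_V] K_nonempty[OF assms]
    by (simp_all add: classes_meeting_eq_image[OF K_subset_V])
  ultimately have "card (traces V E K) \<le> card (Pow ?CM - {{}, ?CM})"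
    by (intro card_inj_on_le) auto
  also have "\<dots> = 2 ^ card ?CM - 2"
    using \<open>finite ?CM\<close> \<open>?CM \<noteq> {}\<close> by (simp add: card_Diff_subset card_Pow)
  finally have "card (traces V E K) \<le> 2 ^ card ?CM - 2" .
  moreover have "(2::nat) ^ 1 \<le> 2 ^ card ?CM"
    using \<open>finite ?CM\<close> \<open>?CM \<noteq> {}\<close> by (intro power_increasing) (auto simp: Suc_le_eq card_gt_0_iff)
  ultimately show ?thesis
    by simp
qed

end

theorem lemma7p1:
  fixes V :: "'a set" and E :: "'a \<Rightarrow> 'a \<Rightarrow> bool" and K :: "'a set"
  assumes "graph V E" and "V \<noteq> {}" and "maximal_clique V E K"
  shows "log 2 (real (dn V E K) + 2) \<le> real (card (classes_meeting V E K))
       \<and> card (classes_meeting V E K) \<le> 2 ^ dn V E K"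
proof -
  interpret graph_maximal_clique V E K
    using assms(1,3) by unfold_locales
  have dn: "dn V E K = card (traces V E K)"
    using finite_V by (rule dn_eq_card_traces)
  have "real (dn V E K + 2) \<le> real (2 ^ card (classes_meeting V E K))"
    using card_traces_add_two_le[OF assms(2)] dn by (simp only: of_nat_le_iff)
  then have "real (dn V E K) + 2 \<le> 2 powr real (card (classes_meeting V E K))"
    by (simp add: powr_realpow)
  then have "log 2 (real (dn V E K) + 2) \<le> real (card (classes_meeting V E K))"
    by (simp add: log_le_iff)
  moreover have "card (classes_meeting V E K) \<le> 2 ^ dn V E K"
    using card_classes_meeting_le dn by simp
  ultimately show ?thesis ..
qed

end
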